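(* Let $G$ be a Lie group of dimension $n$ with Lie algebra $\mathfrak{g}$, let $D$ be a left-invariant completely nonholonomic distribution on $G$ of rank $m$, $2\le m<n$, with a left-invariant inner product $\langle\cdot,\cdot\rangle$ (defining a left-invariant sub-Riemannian metric $d$), and let $D^{\perp}$ be a left-invariant rigging of $D$ such that $[\mathfrak{g},\mathfrak{g}]\subset D^{\perp}(e)$. Then all Solov'ev curvatures (sectional, Ricci and scalar) of $(D,\langle\cdot,\cdot\rangle)$ with respect to the rigging $D^{\perp}$ are equal to zero.
   Context: A rigging of $D$ is a distribution $D^\perp$ with $D\oplus D^\perp=TG$. Solov'ev curvatures: choose a left-invariant Riemannian metric $(\cdot,\cdot)$ on $G$ with $(\cdot,\cdot)|_D=\langle\cdot,\cdot\rangle$ and $(D,D^{\perp})=0$; let $\nabla$ be its Levi-Civita connection and $H,V$ the projections onto $D,D^{\perp}$. Put $\overline{\nabla}_XY=H\nabla_X(HY)+V\nabla_X(VY)$, with torsion $T(X,Y)=\overline{\nabla}_XY-\overline{\nabla}_YX-[X,Y]$ and curvature $\overline{R}(X,Y)=\overline{\nabla}_X\overline{\nabla}_Y-\overline{\nabla}_Y\overline{\nabla}_X-\overline{\nabla}_{[X,Y]}$. The curvature tensor $K$ of $D$ is given for $X,Y,Z,W$ tangent to $D$ by $(K(X,Y)Z,W)=(\overline{R}(X,Y)Z,W)-\tfrac12(T(X,Y),T(Z,W))$. The sectional curvature for non-collinear $u,v\in D(p)$ is $K_{uv}=(K(u,v)v,u)/(\|u\|^2\|v\|^2-(u,v)^2)$;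 the Ricci curvature in direction of a unit $w\in D(p)$ is $\sum_i K_{w e_i}$ over an orthonormal basis $e_i$ of $w^\perp\cap D(p)$, and the scalar curvature is the sum of the Ricci curvatures over an orthonormal basis of $D(p)$. *)

theory Defs
  imports "HOL-Analysis.Analysis"
begin

text \<open>Everything is stated at the level of the Lie algebra g = T_e G, modelled by a
finite-dimensional real inner product space 'a (euclidean_space). Its inner product
is the chosen left-invariant Riemannian metric (.,.) extending the sub-Riemannian
inner product on D(e). Left-invariant vector fields are identified with their values
at e; the Levi-Civita connection of a left-invariant metric on left-invariant fields
is given by the Koszul formula in terms of the Lie bracket.\<close>

definition lie_bracket :: "('a::real_vector \<Rightarrow> 'a \<Rightarrow> 'a) \<Rightarrow> bool" where
  "lie_bracket br \<longleftrightarrow>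
     (\<forall>y. linear (\<lambda>x. br x y)) \<and> (\<forall>x. linear (\<lambda>y. br x y)) \<and>
     (\<forall>x. br x x = 0) \<and>
     (\<forall>x y z. br x (br y z) + br y (br z x) + br z (br x y) = 0)"

inductive_set iter_brackets :: "('a \<Rightarrow> 'a \<Rightarrow> 'a) \<Rightarrow> 'a set \<Rightarrow> 'a set"
  for br D where
  base: "x \<in> D \<Longrightarrow> x \<in> iter_brackets br D"
| step: "x \<in> iter_brackets br D \<Longrightarrow> y \<in> iter_brackets br D \<Longrightarrow> br x y \<in> iter_brackets br D"

text \<open>A left-invariant distribution is completely nonholonomic iff D(e) generates g
as a Lie algebra.\<close>
definition bracket_generating :: "('a::real_vector \<Rightarrow> 'a \<Rightarrow> 'a) \<Rightarrow> 'a set \<Rightarrow> bool" where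
  "bracket_generating br D \<longleftrightarrow> span (iter_brackets br D) = UNIV"

text \<open>Levi-Civita connection on left-invariant fields (Koszul formula).\<close>
definition lc_nabla :: "('a::euclidean_space \<Rightarrow> 'a \<Rightarrow> 'a) \<Rightarrow> 'a \<Rightarrow> 'a \<Rightarrow> 'a" where
  "lc_nabla br X Y = (\<Sum>b\<in>Basis.
      ((1/2) * (inner (br X Y) b - inner (br Y b) X + inner (br b X) Y)) *\<^sub>R b)"

definition proj_along :: "'a::real_vector set \<Rightarrow> 'a set \<Rightarrow> 'a \<Rightarrow> 'a" where
  "proj_along A B x = (THE a. a \<in> A \<and> x - a \<in> B)"

definition nabla_bar :: "('a::euclidean_space \<Rightarrow> 'a \<Rightarrow> 'a) \<Rightarrow> 'a set \<Rightarrow> 'a set \<Rightarrow> 'a \<Rightarrow> 'a \<Rightarrow> 'a" where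
  "nabla_bar br D Dp X Y =
     proj_along D Dp (lc_nabla br X (proj_along D Dp Y)) +
     proj_along Dp D (lc_nabla br X (proj_along Dp D Y))"

definition torsion_bar :: "('a::euclidean_space \<Rightarrow> 'a \<Rightarrow> 'a) \<Rightarrow> 'a set \<Rightarrow> 'a set \<Rightarrow> 'a \<Rightarrow> 'a \<Rightarrow> 'a" where
  "torsion_bar br D Dp X Y = nabla_bar br D Dp X Y - nabla_bar br D Dp Y X - br X Y"

definition curv_bar :: "('a::euclidean_space \<Rightarrow> 'a \<Rightarrow> 'a) \<Rightarrow> 'a set \<Rightarrow> 'a set \<Rightarrow> 'a \<Rightarrow> 'a \<Rightarrow> 'a \<Rightarrow> 'a" where
  "curv_bar br D Dp X Y Z =
     nabla_bar br D Dp X (nabla_bar br D Dp Y Z) - nabla_bar br D Dp Y (nabla_bar br D Dp X Z)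
     - nabla_bar br D Dp (br X Y) Z"

definition K_form :: "('a::euclidean_space \<Rightarrow> 'a \<Rightarrow> 'a) \<Rightarrow> 'a set \<Rightarrow> 'a set \<Rightarrow> 'a \<Rightarrow> 'a \<Rightarrow> 'a \<Rightarrow> 'a \<Rightarrow> real" where
  "K_form br D Dp X Y Z W =
     inner (curv_bar br D Dp X Y Z) W - (1/2) * inner (torsion_bar br D Dp X Y) (torsion_bar br D Dp Z W)"

definition sectional_curv :: "('a::euclidean_space \<Rightarrow> 'a \<Rightarrow> 'a) \<Rightarrow> 'a set \<Rightarrow> 'a set \<Rightarrow> 'a \<Rightarrow> 'a \<Rightarrow> real" where
  "sectional_curv br D Dp u v =
     K_form br D Dp u v v u / ((norm u)\<^sup>2 * (norm v)\<^sup>2 - (inner u v)\<^sup>2)"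

definition noncollinear :: "'a::real_vector \<Rightarrow> 'a \<Rightarrow> bool" where
  "noncollinear u v \<longleftrightarrow> (\<forall>a b. a *\<^sub>R u + b *\<^sub>R v = 0 \<longrightarrow> a = 0 \<and> b = 0)"

definition orthonormal_basis_of :: "'a::euclidean_space set \<Rightarrow> 'a set \<Rightarrow> bool" where
  "orthonormal_basis_of S E \<longleftrightarrow>
     finite E \<and> E \<subseteq> S \<and> (\<forall>e\<in>E. norm e = 1) \<and> pairwise orthogonal E \<and> span E = S"

text \<open>Ricci curvature in direction w, computed with an orthonormal basis E of w^perp \<inter> D.\<close>
definition ricci_curv :: "('a::euclidean_space \<Rightarrow> 'a \<Rightarrow> 'a) \<Rightarrow> 'a set \<Rightarrow> 'a set \<Rightarrow> 'a \<Rightarrow> 'a set \<Rightarrow> real" where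
  "ricci_curv br D Dp w E = (\<Sum>e\<in>E. sectional_curv br D Dp w e)"

end

theory Submission
  imports Defs
begin

text \<open>Since D is orthogonal to the rigging and all brackets lie in the rigging, the Koszul
formula shows that the Levi-Civita derivative of one horizontal field along another is
vertical; hence the horizontal connection vanishes on D, its torsion on D is minus the
bracket, and the only surviving curvature term is (1/2)([Z,W],[X,Y]), which the torsion
correction -(1/2)(T(X,Y),T(Z,W)) cancels exactly.\<close>

lemma inner_lc_nabla:
  assumes "lie_bracket br"
  shows "inner (lc_nabla br X Y) Z =
    (1/2) * (inner (br X Y) Z - inner (br Y Z) X + inner (br Z X) Y)"
proof -
  define f where "f b = (1/2) * (inner (br X Y) b - inner (br Y b) X + inner (br b X) Y)" for b
  have l1: "linear (\<lambda>b. br Y b)" and l2: "linear (\<lambda>b. br b X)"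
    using assms unfolding lie_bracket_def by auto
  have "linear f"
  proof (rule linearI)
    fix a b :: 'a and c :: real
    show "f (a + b) = f a + f b" unfolding f_def
      using linear_add[OF l1] linear_add[OF l2]
      by (simp add: inner_add_left inner_add_right algebra_simps)
    show "f (c *\<^sub>R a) = c *\<^sub>R f a" unfolding f_def
      using linear_scale[OF l1] linear_scale[OF l2]
      by (simp add: algebra_simps)
  qed
  have "inner (lc_nabla br X Y) Z = (\<Sum>b\<in>Basis. f b * inner b Z)"
    unfolding lc_nabla_def f_def by (simp add: inner_sum_left)
  also have "\<dots> = f (\<Sum>b\<in>Basis. inner Z b *\<^sub>R b)"
    using \<open>linear f\<close> by (simp add: linear_sum linear_scale inner_commute mult.commute)
  also have "\<dots> = f Z" by (simp add: euclidean_representation)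
  finally show ?thesis by (simp add: f_def)
qed

lemma lc_nabla_0_right:
  assumes "lie_bracket br"
  shows "lc_nabla br X 0 = 0"
proof -
  have "br X 0 = 0" "br 0 Z = 0" "br Z 0 = 0" for Z
    using assms unfolding lie_bracket_def by (auto intro: linear_0)
  then have "inner (lc_nabla br X 0) (lc_nabla br X 0) = 0"
    by (simp add: inner_lc_nabla[OF assms])
  then show ?thesis by simp
qed

lemma proj_along_eq:
  assumes "A \<inter> B = {0}" "subspace A" "subspace B" "a \<in> A" "x - a \<in> B"
  shows "proj_along A B x = a"
  unfolding proj_along_def
proof (rule the_equality)
  show "a \<in> A \<and> x - a \<in> B" using assms by auto
  fix a' assume a': "a' \<in> A \<and> x - a' \<in> B"
  have "a' - a \<in> A" using a' assms by (simp add: subspace_diff)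
  moreover have "a' - a \<in> B"
    using subspace_diff[OF assms(3) assms(5), of "x - a'"] a' by (simp add: algebra_simps)
  ultimately have "a' - a \<in> A \<inter> B" by blast
  then show "a' = a" using assms(1) by auto
qed

lemma proj_along_mem:
  assumes "A \<inter> B = {0}" "subspace A" "subspace B" "\<forall>x. \<exists>a\<in>A. \<exists>b\<in>B. x = a + b"
  shows "proj_along A B x \<in> A" and "x - proj_along A B x \<in> B"
proof -
  obtain a b where "a \<in> A" "b \<in> B" "x = a + b" using assms(4) by blast
  then have "proj_along A B x = a" using proj_along_eq[OF assms(1-3)] by simp
  with \<open>a \<in> A\<close> \<open>b \<in> B\<close> \<open>x = a + b\<close>
  show "proj_along A B x \<in> A" and "x - proj_along A B x \<in> B" by simp_all
qed

locale orthogonal_rigging =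
  fixes D Dp :: "'a::euclidean_space set"
  assumes subspace_D: "subspace D" and subspace_Dp: "subspace Dp"
    and D_Int_Dp: "D \<inter> Dp = {0}"
    and D_plus_Dp: "\<forall>x. \<exists>d\<in>D. \<exists>p\<in>Dp. x = d + p"
    and orthogonal_D_Dp: "\<forall>d\<in>D. \<forall>p\<in>Dp. inner d p = 0"
begin

lemma proj_D_id: "d \<in> D \<Longrightarrow> proj_along D Dp d = d"
  using proj_along_eq[OF D_Int_Dp subspace_D subspace_Dp] subspace_Dp by (simp add: subspace_0)

lemma proj_Dp_of_D: "d \<in> D \<Longrightarrow> proj_along Dp D d = 0"
  using proj_along_eq[of Dp D 0 d] D_Int_Dp subspace_D subspace_Dp by (auto simp: subspace_0)

lemma proj_D_0: "proj_along D Dp 0 = 0" and proj_Dp_0: "proj_along Dp D 0 = 0"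
  using proj_D_id proj_Dp_of_D subspace_D by (simp_all add: subspace_0)

lemma inner_proj_D:
  assumes "w \<in> D"
  shows "inner (proj_along D Dp x) w = inner x w"
proof -
  have "x - proj_along D Dp x \<in> Dp"
    using proj_along_mem(2)[OF D_Int_Dp subspace_D subspace_Dp D_plus_Dp] .
  then have "inner (x - proj_along D Dp x) w = 0"
    using orthogonal_D_Dp assms by (simp add: inner_commute)
  then show ?thesis by (simp add: inner_diff_left)
qed

lemma proj_D_eq_0:
  assumes "\<And>d. d \<in> D \<Longrightarrow> inner x d = 0"
  shows "proj_along D Dp x = 0"
proof -
  have "proj_along D Dp x \<in> D"
    using proj_along_mem(1)[OF D_Int_Dp subspace_D subspace_Dp D_plus_Dp] .
  then have "inner (proj_along D Dp x) (proj_along D Dp x) = 0"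
    using inner_proj_D assms by simp
  then show ?thesis by simp
qed

end

locale bracket_in_rigging = orthogonal_rigging D Dp
  for D Dp :: "'a::euclidean_space set" +
  fixes br :: "'a \<Rightarrow> 'a \<Rightarrow> 'a"
  assumes lie_bracket: "lie_bracket br"
    and bracket_in_Dp: "\<forall>x y. br x y \<in> Dp"
begin

lemma inner_bracket_D: "d \<in> D \<Longrightarrow> inner (br x y) d = 0" "d \<in> D \<Longrightarrow> inner d (br x y) = 0"
  using orthogonal_D_Dp bracket_in_Dp by (auto simp: inner_commute)

lemma nabla_bar_0_right: "nabla_bar br D Dp X 0 = 0"
  unfolding nabla_bar_def by (simp add: proj_D_0 proj_Dp_0 lc_nabla_0_right[OF lie_bracket])

lemma nabla_bar_D: "Z \<in> D \<Longrightarrow> nabla_bar br D Dp Y Z = proj_along D Dp (lc_nabla br Y Z)"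
  unfolding nabla_bar_def
  by (simp add: proj_D_id proj_Dp_of_D proj_Dp_0 lc_nabla_0_right[OF lie_bracket])

lemma nabla_bar_D_D:
  assumes "Y \<in> D" "Z \<in> D"
  shows "nabla_bar br D Dp Y Z = 0"
  unfolding nabla_bar_D[OF assms(2)]
  by (rule proj_D_eq_0) (simp add: inner_lc_nabla[OF lie_bracket] inner_bracket_D assms)

lemma torsion_bar_D_D: "X \<in> D \<Longrightarrow> Y \<in> D \<Longrightarrow> torsion_bar br D Dp X Y = - br X Y"
  unfolding torsion_bar_def by (simp add: nabla_bar_D_D)

lemma inner_curv_bar_D:
  assumes "X \<in> D" "Y \<in> D" "Z \<in> D" "W \<in> D"
  shows "inner (curv_bar br D Dp X Y Z) W = (1/2) * inner (br Z W) (br X Y)"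
proof -
  have "curv_bar br D Dp X Y Z = - proj_along D Dp (lc_nabla br (br X Y) Z)"
    unfolding curv_bar_def using assms by (simp add: nabla_bar_D_D nabla_bar_0_right nabla_bar_D)
  then show ?thesis
    using assms by (simp add: inner_proj_D inner_lc_nabla[OF lie_bracket] inner_bracket_D)
qed

lemma K_form_D:
  assumes "X \<in> D" "Y \<in> D" "Z \<in> D" "W \<in> D"
  shows "K_form br D Dp X Y Z W = 0"
  unfolding K_form_def
  using assms by (simp add: inner_curv_bar_D torsion_bar_D_D inner_commute[of "br X Y"])

lemma sectional_curv_D: "u \<in> D \<Longrightarrow> v \<in> D \<Longrightarrow> sectional_curv br D Dp u v = 0"
  unfolding sectional_curv_def by (simp add: K_form_D)

lemma ricci_curv_D: "w \<in> D \<Longrightarrow> E \<subseteq> D \<Longrightarrow> ricci_curv br D Dp w E = 0"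
  unfolding ricci_curv_def by (auto intro: sum.neutral sectional_curv_D)

end

theorem proposition3:
  fixes br :: "'a::euclidean_space \<Rightarrow> 'a \<Rightarrow> 'a"
    and D Dp :: "'a set"
  assumes "lie_bracket br"
    and "subspace D" and "subspace Dp"
    and "D \<inter> Dp = {0}" and "\<forall>x. \<exists>d\<in>D. \<exists>p\<in>Dp. x = d + p"
    and "\<forall>d\<in>D. \<forall>p\<in>Dp. inner d p = 0"
    and "2 \<le> dim D" and "dim D < DIM('a)"
    and "bracket_generating br D"
    and "\<forall>x y. br x y \<in> Dp"
  shows "(\<forall>u\<in>D. \<forall>v\<in>D. noncollinear u v \<longrightarrow> sectional_curv br D Dp u v = 0)
       \<and> (\<forall>w\<in>D. \<forall>E. norm w = 1 \<longrightarrow> orthonormal_basis_of {v\<in>D. inner v w = 0} E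
              \<longrightarrow> ricci_curv br D Dp w E = 0)
       \<and> (\<forall>B Es. orthonormal_basis_of D B
              \<longrightarrow> (\<forall>b\<in>B. orthonormal_basis_of {v\<in>D. inner v b = 0} (Es b))
              \<longrightarrow> (\<Sum>b\<in>B. ricci_curv br D Dp b (Es b)) = 0)"
proof -
  interpret bracket_in_rigging D Dp br
    using assms(1-6,10) by unfold_locales
  have basis_in_D: "E \<subseteq> D" if "orthonormal_basis_of {v\<in>D. inner v w = 0} E" for w E
    using that unfolding orthonormal_basis_of_def by blast
  show ?thesis
  proof (intro conjI ballI allI impI)
    fix u v assume "u \<in> D" "v \<in> D"
    then show "sectional_curv br D Dp u v = 0" by (rule sectional_curv_D)
  next
    fix w E assume "w \<in> D" "orthonormal_basis_of {v\<in>D. inner v w = 0} E"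
    then show "ricci_curv br D Dp w E = 0" by (intro ricci_curv_D basis_in_D)
  next
    fix B Es
    assume B: "orthonormal_basis_of D B"
      and Es: "\<forall>b\<in>B. orthonormal_basis_of {v\<in>D. inner v b = 0} (Es b)"
    have "B \<subseteq> D" using B unfolding orthonormal_basis_of_def by blast
    with Es show "(\<Sum>b\<in>B. ricci_curv br D Dp b (Es b)) = 0"
      by (intro sum.neutral ballI ricci_curv_D basis_in_D) auto
  qed
qed

end
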